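(* Let $(V,\kappa,\varpi,\Theta)$ be a synergistic feedback quadruple relative to a compact set $\mathcal{A}$, with gap exceeding $\delta>0$, for the extended system, where $\kappa$ has the decomposition $\kappa(x,\theta)=\varsigma(x)+\Upsilon(x)\sigma(x,\theta)$, and suppose Assumption 1 holds with constant $c_\kappa>0$. Choose $0<\gamma_s<\delta/c_\kappa$ and $k_\eta>0$, and define $V_s,\kappa_s$ as below. Then $(V_s,\kappa_s,\varpi,\Theta)$ is a synergistic feedback quadruple relative to the set $\mathcal{A}_s=\{(x,\eta,\theta)\in\mathcal{X}_s\times\mathbb{R}^r:(x,\theta)\in\mathcal{A},\ \eta=\sigma(x,\theta)\}$ for the smooth extended system, with gap exceeding any $\delta_s\in(0,\delta-\gamma_sc_\kappa]$.
   Context: Let $\mathcal{X}\subseteq\mathbb{R}^n$ be closed and nonempty, and let $f:\mathcal{X}\to\mathbb{R}^n$, $g:\mathcal{X}\to\mathbb{R}^{n\times m}$ be smooth, defining the control system $\dot x=f(x)+g(x)u$. Let $r\ge 1$, let $\Theta\subset\mathbb{R}^r$ be finite and nonempty, and let $\varpi:\mathcal{X}\times\mathbb{R}^r\to\mathbb{R}^r$ be smooth. The extended system is $\frac{d}{dt}(x,\theta)=f_c(x,\theta)+g_c(x,\theta)u$ with $f_c(x,\theta)=(f(x),\varpi(x,\theta))$ and $g_c(x,\theta)=(g(x),0)$. General definitions (for any system $\dot z=\tilde f(z,\theta)+\tilde g(z,\theta)v$ on $\mathcal{Z}\times\mathbb{R}^r$, $\mathcal{Z}$ closed, with $\dot\theta$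 being the last block of the drift): for smooth $W:\mathcal{Z}\times\mathbb{R}^r\to\mathbb{R}_{\ge0}$ and feedback $k$, $\mu_{W,\Theta}(z,\theta)=W(z,\theta)-\min_{\bar\theta\in\Theta}W(z,\bar\theta)$; $\mathcal{E}_W=\{(z,\theta):\langle\nabla W,\tilde f+\tilde g k\rangle=0\}$ with $\nabla W$ the full gradient; $\Psi_W\subseteq\mathcal{E}_W$ is the largest subset of $\mathcal{E}_W$ that is weakly invariant (weakly forward and backward invariant) for the closed-loop flow $\dot z=\tilde f+\tilde gk$. Given compact $\mathcal{A}'$ and $\delta'>0$, $(W,k,\varpi,\Theta)$ is a synergistic feedback quadruple relative to $\mathcal{A}'$ for that system with gap exceeding $\delta'$ if (C1) every sublevel set $\{W\le\epsilon\}$, $\epsilon\ge0$, is compact; (C2) $W$ is positive definite with respect to $\mathcal{A}'$; (C3) $\langle\nabla W,\tilde f+\tilde gk\rangle\le0$ everywhere; (C4) $\inf_{\Psi_W\setminus\mathcal{A}'}\mu_{W,\Theta}>\delta'$. (For the extended system this is applied with $z=x$, $\tilde f=f_c$, $\tilde g=g_c$.) Decomposition: $\varsigma:\mathcal{X}\to\mathbb{R}^m$, $\Upsilon:\mathcal{X}\to\mathbb{R}^{m\times s}$, $\sigma:\mathcal{X}\times\mathbb{R}^r\to\mathbb{R}^s$ smooth with $\kappa(x,\theta)=\varsigma(x)+\Upsilon(x)\sigma(x,\theta)$; set $\bar\kappa(x,\eta)=\varsigma(x)+\Upsilon(x)\eta$ for $\eta\in\mathbb{R}^s$. Assumption 1: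 there is $c_\kappa>0$ with $\max_{\bar\theta\in\Theta}\|\sigma(x,\theta)-\sigma(x,\bar\theta)\|^2\le2c_\kappa$ for all $(x,\theta)\in\Psi_V\setminus\mathcal{A}$, where $\Psi_V$ is defined for the extended system with $W=V$, $k=\kappa$. Smooth extended system: state $x_s=(x,\eta)\in\mathcal{X}_s:=\mathcal{X}\times\mathbb{R}^s$ and $\theta\in\mathbb{R}^r$, with $\dot x=f(x)+g(x)\bar\kappa(x,\eta)$, $\dot\eta=u_s$, $\dot\theta=\varpi(x,\theta)$, i.e. drift $f_s=(f+g\bar\kappa,0,\varpi)$ and input matrix $g_s=(0,I_s,0)$. $V_s(x_s,\theta)=V(x,\theta)+\frac{\gamma_s}{2}\|\eta-\sigma(x,\theta)\|^2$, and $\kappa_s(x_s,\theta)=-k_\eta(\eta-\sigma(x,\theta))+\mathcal{D}_t\sigma(x,\theta)-\frac{1}{\gamma_s}\Upsilon(x)^\top g(x)^\top\nabla_xV(x,\theta)$, where $\mathcal{D}_t\sigma(x,\theta)=\mathcal{D}_x\sigma(x,\theta)(f(x)+g(x)\bar\kappa(x,\eta))+\mathcal{D}_\theta\sigma(x,\theta)\varpi(x,\theta)$ and $\mathcal{D}_x,\mathcal{D}_\theta$ denote Jacobians. *)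

theory Defs
  imports "HOL-Analysis.Analysis"
begin

fun iter_dderiv :: "'a list \<Rightarrow> ('a::real_normed_vector \<Rightarrow> 'b::real_normed_vector) \<Rightarrow> 'a \<Rightarrow> 'b" where
  "iter_dderiv [] f = f"
| "iter_dderiv (v # vs) f = (\<lambda>x. frechet_derivative (iter_dderiv vs f) (at x) v)"

definition smooth :: "('a::real_normed_vector \<Rightarrow> 'b::real_normed_vector) \<Rightarrow> bool" where
  "smooth f \<longleftrightarrow> (\<forall>vs x. iter_dderiv vs f differentiable (at x))"

definition closed_loop :: "('p \<Rightarrow> 'p::real_normed_vector) \<Rightarrow> ('p \<Rightarrow> 'v \<Rightarrow> 'p) \<Rightarrow> ('p \<Rightarrow> 'v) \<Rightarrow> 'p \<Rightarrow> 'p" where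
  "closed_loop ft gt k p = ft p + gt p (k p)"

definition flow_solution_on :: "'p set \<Rightarrow> ('p \<Rightarrow> 'p::real_normed_vector) \<Rightarrow> (real \<Rightarrow> 'p) \<Rightarrow> real \<Rightarrow> bool" where
  "flow_solution_on D F \<phi> T \<longleftrightarrow> 0 \<le> T \<and>
     (\<forall>t\<in>{0..T}. \<phi> t \<in> D \<and> (\<phi> has_vector_derivative F (\<phi> t)) (at t within {0..T}))"

definition complete_solution :: "'p set \<Rightarrow> ('p \<Rightarrow> 'p::real_normed_vector) \<Rightarrow> (real \<Rightarrow> 'p) \<Rightarrow> bool" where
  "complete_solution D F \<phi> \<longleftrightarrow>
     (\<forall>t\<in>{0..}. \<phi> t \<in> D \<and> (\<phi> has_vector_derivative F (\<phi> t)) (at t within {0..}))"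

definition weakly_forward_invariant :: "'p set \<Rightarrow> ('p \<Rightarrow> 'p::real_normed_vector) \<Rightarrow> 'p set \<Rightarrow> bool" where
  "weakly_forward_invariant D F S \<longleftrightarrow>
     (\<forall>\<xi>\<in>S. \<exists>\<phi>. \<phi> 0 = \<xi> \<and> complete_solution D F \<phi> \<and> (\<forall>t\<in>{0..}. \<phi> t \<in> S))"

definition weakly_backward_invariant :: "'p set \<Rightarrow> ('p \<Rightarrow> 'p::real_normed_vector) \<Rightarrow> 'p set \<Rightarrow> bool" where
  "weakly_backward_invariant D F S \<longleftrightarrow>
     (\<forall>q\<in>S. \<forall>N>0. \<exists>\<xi>0\<in>S. \<exists>\<phi> T. \<phi> 0 = \<xi>0 \<and> N \<le> T \<and> flow_solution_on D F \<phi> T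
         \<and> \<phi> T = q \<and> (\<forall>t\<in>{0..T}. \<phi> t \<in> S))"

definition weakly_invariant :: "'p set \<Rightarrow> ('p \<Rightarrow> 'p::real_normed_vector) \<Rightarrow> 'p set \<Rightarrow> bool" where
  "weakly_invariant D F S \<longleftrightarrow> weakly_forward_invariant D F S \<and> weakly_backward_invariant D F S"

definition lie_W :: "('z \<times> 'r \<Rightarrow> real) \<Rightarrow> ('z \<times> 'r \<Rightarrow> 'z \<times> 'r) \<Rightarrow> 'z::real_normed_vector \<times> 'r::real_normed_vector \<Rightarrow> real" where
  "lie_W W F p = frechet_derivative W (at p) (F p)"

definition mu_W :: "('z \<times> 'r \<Rightarrow> real) \<Rightarrow> 'r set \<Rightarrow> 'z \<times> 'r \<Rightarrow> real" where
  "mu_W W \<Theta> p = W p - Min ((\<lambda>\<theta>b. W (fst p, \<theta>b)) ` \<Theta>)"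

definition E_W :: "'z set \<Rightarrow> ('z \<times> 'r \<Rightarrow> 'z \<times> 'r) \<Rightarrow> ('z \<times> 'r \<Rightarrow> 'v \<Rightarrow> 'z \<times> 'r) \<Rightarrow>
    ('z \<times> 'r \<Rightarrow> real) \<Rightarrow> ('z \<times> 'r \<Rightarrow> 'v) \<Rightarrow> ('z::real_normed_vector \<times> 'r::real_normed_vector) set" where
  "E_W Z ft gt W k = {p \<in> Z \<times> UNIV. lie_W W (closed_loop ft gt k) p = 0}"

text \<open>Largest weakly invariant subset of E_W (union of all weakly invariant subsets).\<close>
definition Psi_W :: "'z set \<Rightarrow> ('z \<times> 'r \<Rightarrow> 'z \<times> 'r) \<Rightarrow> ('z \<times> 'r \<Rightarrow> 'v \<Rightarrow> 'z \<times> 'r) \<Rightarrow>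
    ('z \<times> 'r \<Rightarrow> real) \<Rightarrow> ('z \<times> 'r \<Rightarrow> 'v) \<Rightarrow> ('z::real_normed_vector \<times> 'r::real_normed_vector) set" where
  "Psi_W Z ft gt W k = \<Union>{S. S \<subseteq> E_W Z ft gt W k \<and> weakly_invariant (Z \<times> UNIV) (closed_loop ft gt k) S}"

definition synergistic_quadruple ::
  "'z set \<Rightarrow> ('z \<times> 'r \<Rightarrow> 'z \<times> 'r) \<Rightarrow> ('z \<times> 'r \<Rightarrow> 'v \<Rightarrow> 'z \<times> 'r) \<Rightarrow>
   ('z \<times> 'r \<Rightarrow> real) \<Rightarrow> ('z \<times> 'r \<Rightarrow> 'v) \<Rightarrow> 'r set \<Rightarrow>
   ('z::real_normed_vector \<times> 'r::real_normed_vector) set \<Rightarrow> real \<Rightarrow> bool" where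
  "synergistic_quadruple Z ft gt W k \<Theta> A' \<delta>' \<longleftrightarrow>
     smooth W \<and> (\<forall>p\<in>Z \<times> UNIV. 0 \<le> W p) \<and> compact A' \<and>
     \<comment> \<open>(C1)\<close> (\<forall>\<epsilon>\<ge>0. compact {p \<in> Z \<times> UNIV. W p \<le> \<epsilon>}) \<and>
     \<comment> \<open>(C2)\<close> A' \<subseteq> Z \<times> UNIV \<and> (\<forall>p\<in>Z \<times> UNIV. W p = 0 \<longleftrightarrow> p \<in> A') \<and>
     \<comment> \<open>(C3)\<close> (\<forall>p\<in>Z \<times> UNIV. lie_W W (closed_loop ft gt k) p \<le> 0) \<and>
     \<comment> \<open>(C4): infimum (+infinity on the empty set) exceeds delta'\<close>
       (\<exists>c>\<delta>'. \<forall>p\<in>Psi_W Z ft gt W k - A'. c \<le> mu_W W \<Theta> p)"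

definition f_c :: "(real^'n \<Rightarrow> real^'n) \<Rightarrow> ((real^'n) \<times> (real^'r) \<Rightarrow> real^'r) \<Rightarrow>
    (real^'n) \<times> (real^'r) \<Rightarrow> (real^'n) \<times> (real^'r)" where
  "f_c f \<omega> p = (f (fst p), \<omega> p)"

definition g_c :: "(real^'n \<Rightarrow> real^'m^'n) \<Rightarrow> (real^'n) \<times> (real^'r) \<Rightarrow> real^'m \<Rightarrow> (real^'n) \<times> (real^'r)" where
  "g_c g p u = (g (fst p) *v u, 0)"

definition kappa_dec :: "(real^'n \<Rightarrow> real^'m) \<Rightarrow> (real^'n \<Rightarrow> real^'s^'m) \<Rightarrow>
    ((real^'n) \<times> (real^'r) \<Rightarrow> real^'s) \<Rightarrow> (real^'n) \<times> (real^'r) \<Rightarrow> real^'m" where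
  "kappa_dec vs Ups sig p = vs (fst p) + Ups (fst p) *v sig p"

definition kappa_bar :: "(real^'n \<Rightarrow> real^'m) \<Rightarrow> (real^'n \<Rightarrow> real^'s^'m) \<Rightarrow> real^'n \<Rightarrow> real^'s \<Rightarrow> real^'m" where
  "kappa_bar vs Ups x \<eta> = vs x + Ups x *v \<eta>"

definition f_s :: "(real^'n \<Rightarrow> real^'n) \<Rightarrow> (real^'n \<Rightarrow> real^'m^'n) \<Rightarrow> ((real^'n) \<times> (real^'r) \<Rightarrow> real^'r) \<Rightarrow>
    (real^'n \<Rightarrow> real^'m) \<Rightarrow> (real^'n \<Rightarrow> real^'s^'m) \<Rightarrow>
    ((real^'n) \<times> (real^'s)) \<times> (real^'r) \<Rightarrow> ((real^'n) \<times> (real^'s)) \<times> (real^'r)" where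
  "f_s f g \<omega> vs Ups q = (case q of ((x, \<eta>), \<theta>) \<Rightarrow>
      ((f x + g x *v kappa_bar vs Ups x \<eta>, 0), \<omega> (x, \<theta>)))"

definition g_s :: "((real^'n) \<times> (real^'s)) \<times> (real^'r) \<Rightarrow> real^'s \<Rightarrow> ((real^'n) \<times> (real^'s)) \<times> (real^'r)" where
  "g_s q us = ((0, us), 0)"

definition grad_x :: "((real^'n) \<times> (real^'r) \<Rightarrow> real) \<Rightarrow> real^'n \<Rightarrow> real^'r \<Rightarrow> real^'n" where
  "grad_x V x \<theta> = (\<chi> i. frechet_derivative (\<lambda>y. V (y, \<theta>)) (at x) (axis i 1))"

definition V_s :: "((real^'n) \<times> (real^'r) \<Rightarrow> real) \<Rightarrow> ((real^'n) \<times> (real^'r) \<Rightarrow> real^'s) \<Rightarrow> real \<Rightarrow>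
    ((real^'n) \<times> (real^'s)) \<times> (real^'r) \<Rightarrow> real" where
  "V_s V sig \<gamma>s q = (case q of ((x, \<eta>), \<theta>) \<Rightarrow>
      V (x, \<theta>) + \<gamma>s / 2 * (norm (\<eta> - sig (x, \<theta>)))\<^sup>2)"

text \<open>D_t sigma = D_x sigma (f + g kappa_bar) + D_theta sigma varpi, i.e. the full Jacobian of sigma
  applied to the vector (f + g kappa_bar, varpi).\<close>
definition Dt_sigma :: "(real^'n \<Rightarrow> real^'n) \<Rightarrow> (real^'n \<Rightarrow> real^'m^'n) \<Rightarrow> ((real^'n) \<times> (real^'r) \<Rightarrow> real^'r) \<Rightarrow>
    (real^'n \<Rightarrow> real^'m) \<Rightarrow> (real^'n \<Rightarrow> real^'s^'m) \<Rightarrow> ((real^'n) \<times> (real^'r) \<Rightarrow> real^'s) \<Rightarrow>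
    real^'n \<Rightarrow> real^'s \<Rightarrow> real^'r \<Rightarrow> real^'s" where
  "Dt_sigma f g \<omega> vs Ups sig x \<eta> \<theta> =
     frechet_derivative sig (at (x, \<theta>)) (f x + g x *v kappa_bar vs Ups x \<eta>, \<omega> (x, \<theta>))"

definition kappa_s :: "(real^'n \<Rightarrow> real^'n) \<Rightarrow> (real^'n \<Rightarrow> real^'m^'n) \<Rightarrow> ((real^'n) \<times> (real^'r) \<Rightarrow> real^'r) \<Rightarrow>
    (real^'n \<Rightarrow> real^'m) \<Rightarrow> (real^'n \<Rightarrow> real^'s^'m) \<Rightarrow> ((real^'n) \<times> (real^'r) \<Rightarrow> real^'s) \<Rightarrow>
    ((real^'n) \<times> (real^'r) \<Rightarrow> real) \<Rightarrow> real \<Rightarrow> real \<Rightarrow>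
    ((real^'n) \<times> (real^'s)) \<times> (real^'r) \<Rightarrow> real^'s" where
  "kappa_s f g \<omega> vs Ups sig V \<gamma>s k\<eta> q = (case q of ((x, \<eta>), \<theta>) \<Rightarrow>
      - (k\<eta> *\<^sub>R (\<eta> - sig (x, \<theta>)))
      + Dt_sigma f g \<omega> vs Ups sig x \<eta> \<theta>
      - (1 / \<gamma>s) *\<^sub>R (transpose (Ups x) *v (transpose (g x) *v grad_x V x \<theta>)))"

definition A_s :: "((real^'n) \<times> (real^'r)) set \<Rightarrow> ((real^'n) \<times> (real^'r) \<Rightarrow> real^'s) \<Rightarrow>
    (((real^'n) \<times> (real^'s)) \<times> (real^'r)) set" where
  "A_s A sig = {((x, \<eta>), \<theta>). (x, \<theta>) \<in> A \<and> \<eta> = sig (x, \<theta>)}"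

end

theory Submission
  imports Defs
begin

text \<open>Along the closed loop of the smooth extended system, the Lie derivative of \<open>V_s\<close> equals
  that of \<open>V\<close> along the extended closed loop minus \<open>\<gamma>s k\<eta> \<parallel>\<eta> - \<sigma>\<parallel>\<^sup>2\<close>: the feedback
  \<open>\<kappa>_s\<close> is built to cancel all cross terms. Hence \<open>V_s\<close> is nonincreasing, and where its
  derivative vanishes we have \<open>\<eta> = \<sigma>\<close>; there the smooth closed loop projects onto the
  extended one, so the largest weakly invariant set of the former projects into that of the
  latter. At such points \<open>V_s = V\<close>, while switching \<open>\<theta>\<close> to another \<open>\<theta>b\<close> adds at most
  \<open>\<gamma>s/2 \<parallel>\<sigma>(x,\<theta>) - \<sigma>(x,\<theta>b)\<parallel>\<^sup>2 \<le> \<gamma>s c\<kappa>\<close> to \<open>V_s\<close>; so the synergy gap shrinks by at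
  most \<open>\<gamma>s c\<kappa>\<close>.\<close>

section \<open>Smooth functions\<close>

lemma iter_dderiv_snoc:
  "iter_dderiv (vs @ [v]) f = iter_dderiv vs (\<lambda>x. frechet_derivative f (at x) v)"
  by (induction vs) auto

lemma smooth_coinduct:
  assumes differentiable: "\<And>h x. h \<in> F \<Longrightarrow> h differentiable (at x)"
    and closed: "\<And>h v. h \<in> F \<Longrightarrow> (\<lambda>x. frechet_derivative h (at x) v) \<in> F"
    and "f \<in> F"
  shows "smooth f"
proof -
  have "\<forall>h\<in>F. \<forall>x. iter_dderiv vs h differentiable (at x)" for vs
  proof (induction vs rule: rev_induct)
    case Nil
    then show ?case using differentiable by simp
  next
    case (snoc v vs)
    then show ?case using closed by (simp add: iter_dderiv_snoc)
  qed
  then show ?thesis using \<open>f \<in> F\<close> unfolding smooth_def by blast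
qed

lemma smooth_imp_differentiable: "smooth f \<Longrightarrow> f differentiable (at x)"
  using iter_dderiv.simps(1) smooth_def by metis

lemma smooth_has_derivative: "smooth f \<Longrightarrow> (f has_derivative frechet_derivative f (at x)) (at x)"
  using smooth_imp_differentiable frechet_derivative_works by blast

lemma smooth_directional_derivative:
  "smooth f \<Longrightarrow> smooth (\<lambda>x. frechet_derivative f (at x) v)"
  unfolding smooth_def by (metis iter_dderiv_snoc)

lemma smooth_imp_continuous_on: "smooth f \<Longrightarrow> continuous_on S f"
  by (intro continuous_at_imp_continuous_on ballI differentiable_imp_continuous_within
      smooth_imp_differentiable)

lemma smooth_bounded_linear:
  assumes "bounded_linear L"
  shows "smooth L"
proof (rule smooth_coinduct[where F="Collect bounded_linear \<union> range (\<lambda>c x. c)"])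
  fix h v
  assume "h \<in> Collect bounded_linear \<union> range (\<lambda>c x. c)"
  moreover have "frechet_derivative h (at x) = h" if "bounded_linear h" for x
    using frechet_derivative_at[OF bounded_linear_imp_has_derivative[OF that]] by simp
  ultimately show "(\<lambda>x. frechet_derivative h (at x) v) \<in> Collect bounded_linear \<union> range (\<lambda>c x. c)"
    by auto
qed (use assms in \<open>auto intro: bounded_linear_imp_differentiable\<close>)

lemma smooth_Pair:
  assumes "smooth f" "smooth g"
  shows "smooth (\<lambda>x. (f x, g x))"
proof (rule smooth_coinduct[where F="{\<lambda>x. (f x, g x) |f g. smooth f \<and> smooth g}"])
  fix h x
  assume "h \<in> {\<lambda>x. (f x, g x) |f g. smooth f \<and> smooth g}"
  then show "h differentiable (at x)"
    using differentiable_Pair[OF smooth_imp_differentiable smooth_imp_differentiable] by auto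
next
  fix h v
  assume "h \<in> {\<lambda>x. (f x, g x) |f g. smooth f \<and> smooth g}"
  then obtain f g where fg: "smooth f" "smooth g" "h = (\<lambda>x. (f x, g x))" by auto
  have "frechet_derivative h (at x) =
      (\<lambda>u. (frechet_derivative f (at x) u, frechet_derivative g (at x) u))" for x
    unfolding fg(3)
    by (intro frechet_derivative_at[symmetric] has_derivative_Pair smooth_has_derivative fg)
  then show "(\<lambda>x. frechet_derivative h (at x) v) \<in> {\<lambda>x. (f x, g x) |f g. smooth f \<and> smooth g}"
    using fg by (intro CollectI exI[of _ "\<lambda>x. frechet_derivative f (at x) v"]
        exI[of _ "\<lambda>x. frechet_derivative g (at x) v"]) (auto intro: smooth_directional_derivative)
qed (use assms in blast)

lemma smooth_bounded_linear_compose: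
  assumes "smooth f" "bounded_linear L"
  shows "smooth (\<lambda>x. L (f x))"
proof (rule smooth_coinduct[where F="{\<lambda>x. L (f x) |f. smooth f}"])
  fix h x
  assume "h \<in> {\<lambda>x. L (f x) |f. smooth f}"
  then show "h differentiable (at x)"
    using bounded_linear.has_derivative[OF assms(2) smooth_has_derivative]
    unfolding differentiable_def by blast
next
  fix h v
  assume "h \<in> {\<lambda>x. L (f x) |f. smooth f}"
  then obtain f where f: "smooth f" "h = (\<lambda>x. L (f x))" by auto
  have "frechet_derivative h (at x) = (\<lambda>u. L (frechet_derivative f (at x) u))" for x
    unfolding f(2)
    by (rule frechet_derivative_at[symmetric],
        rule bounded_linear.has_derivative[OF assms(2) smooth_has_derivative[OF f(1)]])
  then show "(\<lambda>x. frechet_derivative h (at x) v) \<in> {\<lambda>x. L (f x) |f. smooth f}"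
    using smooth_directional_derivative[OF f(1)] by auto
qed (use assms in auto)

lemma smooth_compose_bounded_linear:
  assumes "smooth f" "bounded_linear L"
  shows "smooth (\<lambda>x. f (L x))"
proof (rule smooth_coinduct[where F="{\<lambda>x. f (L x) |f. smooth f}"])
  note L = bounded_linear_imp_has_derivative[OF assms(2)]
  fix h x
  assume "h \<in> {\<lambda>x. f (L x) |f. smooth f}"
  then show "h differentiable (at x)"
    using has_derivative_compose[OF L smooth_has_derivative]
    unfolding differentiable_def by blast
next
  note L = bounded_linear_imp_has_derivative[OF assms(2)]
  fix h v
  assume "h \<in> {\<lambda>x. f (L x) |f. smooth f}"
  then obtain f where f: "smooth f" "h = (\<lambda>x. f (L x))" by auto
  have "frechet_derivative h (at x) = (\<lambda>u. frechet_derivative f (at (L x)) (L u))" for x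
    unfolding f(2)
    by (rule frechet_derivative_at[symmetric],
        rule has_derivative_compose[OF L smooth_has_derivative[OF f(1)]])
  then show "(\<lambda>x. frechet_derivative h (at x) v) \<in> {\<lambda>x. f (L x) |f. smooth f}"
    using smooth_directional_derivative[OF f(1), of "L v"] by auto
qed (use assms in auto)

lemma smooth_add: "smooth f \<Longrightarrow> smooth g \<Longrightarrow> smooth (\<lambda>x. f x + g x)"
  using smooth_bounded_linear_compose[OF smooth_Pair bounded_linear_add[OF bounded_linear_fst bounded_linear_snd]]
  by simp

lemma smooth_diff: "smooth f \<Longrightarrow> smooth g \<Longrightarrow> smooth (\<lambda>x. f x - g x)"
  using smooth_bounded_linear_compose[OF smooth_Pair bounded_linear_sub[OF bounded_linear_fst bounded_linear_snd]]
  by simp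

lemma smooth_scaleR: "smooth f \<Longrightarrow> smooth (\<lambda>x. c *\<^sub>R f x)"
  by (rule smooth_bounded_linear_compose[where L="\<lambda>y. c *\<^sub>R y", OF _ bounded_linear_scaleR_right])

text \<open>Derivatives of a sum of inner products are again such sums, so these sums form a family
  closed under directional derivatives, to which the coinduction principle applies.\<close>

definition inner_sum :: "(('a \<Rightarrow> 'b::real_inner) \<times> ('a \<Rightarrow> 'b)) list \<Rightarrow> 'a \<Rightarrow> real" where
  "inner_sum l x = (\<Sum>p\<leftarrow>l. fst p x \<bullet> snd p x)"

definition inner_sum_deriv ::
    "'a \<Rightarrow> (('a::real_normed_vector \<Rightarrow> 'b::real_inner) \<times> ('a \<Rightarrow> 'b)) list \<Rightarrow> (('a \<Rightarrow> 'b) \<times> ('a \<Rightarrow> 'b)) list" where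
  "inner_sum_deriv v l = concat (map (\<lambda>p.
      [(\<lambda>x. frechet_derivative (fst p) (at x) v, snd p), (fst p, \<lambda>x. frechet_derivative (snd p) (at x) v)]) l)"

lemma has_derivative_inner_sum:
  assumes "\<forall>p\<in>set l. smooth (fst p) \<and> smooth (snd p)"
  shows "(inner_sum l has_derivative (\<lambda>v. inner_sum (inner_sum_deriv v l) x)) (at x)"
  using assms
proof (induction l)
  case Nil
  then show ?case by (simp add: inner_sum_def inner_sum_deriv_def)
next
  case (Cons p l)
  then have "((\<lambda>x. fst p x \<bullet> snd p x + inner_sum l x) has_derivative
      (\<lambda>v. (fst p x \<bullet> frechet_derivative (snd p) (at x) v + frechet_derivative (fst p) (at x) v \<bullet> snd p x)
         + inner_sum (inner_sum_deriv v l) x)) (at x)"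
    by (intro has_derivative_add has_derivative_inner smooth_has_derivative) auto
  then show ?case
    by (simp add: inner_sum_def inner_sum_deriv_def algebra_simps inner_commute)
qed

lemma smooth_inner:
  fixes f g :: "'a::real_normed_vector \<Rightarrow> 'b::real_inner"
  assumes "smooth f" "smooth g"
  shows "smooth (\<lambda>x. f x \<bullet> g x)"
proof -
  define F where "F = {inner_sum l |l :: (('a \<Rightarrow> 'b) \<times> ('a \<Rightarrow> 'b)) list.
    \<forall>p\<in>set l. smooth (fst p) \<and> smooth (snd p)}"
  show ?thesis
  proof (rule smooth_coinduct[of F])
    fix h x
    assume "h \<in> F"
    then show "h differentiable (at x)"
      using has_derivative_inner_sum unfolding F_def differentiable_def by blast
  next
    fix h v
    assume "h \<in> F"
    then obtain l :: "(('a \<Rightarrow> 'b) \<times> ('a \<Rightarrow> 'b)) list"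
      where l: "\<forall>p\<in>set l. smooth (fst p) \<and> smooth (snd p)" "h = inner_sum l"
      unfolding F_def by blast
    have "frechet_derivative h (at x) = (\<lambda>v. inner_sum (inner_sum_deriv v l) x)" for x
      unfolding l(2) by (rule frechet_derivative_at[symmetric], rule has_derivative_inner_sum[OF l(1)])
    moreover have "\<forall>p\<in>set (inner_sum_deriv v l). smooth (fst p) \<and> smooth (snd p)"
      using l(1) by (auto simp: inner_sum_deriv_def intro: smooth_directional_derivative)
    ultimately show "(\<lambda>x. frechet_derivative h (at x) v) \<in> F"
      unfolding F_def by auto
  next
    show "(\<lambda>x. f x \<bullet> g x) \<in> F"
      unfolding F_def using assms
      by (intro CollectI exI[of _ "[(f, g)]"]) (simp add: inner_sum_def fun_eq_iff)
  qed
qed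

section \<open>The Lyapunov function of the smooth extended system\<close>

lemma bounded_linear_drop_middle:
  "bounded_linear (\<lambda>q::('a::real_normed_vector \<times> 'b::real_normed_vector) \<times> 'c::real_normed_vector.
     (fst (fst q), snd q))"
  by (intro bounded_linear_Pair bounded_linear_compose[OF bounded_linear_fst bounded_linear_fst]
      bounded_linear_snd)

lemma V_s_eq_inner:
  "V_s V \<sigma> \<gamma>s = (\<lambda>q. V (fst (fst q), snd q) +
      \<gamma>s / 2 * ((snd (fst q) - \<sigma> (fst (fst q), snd q)) \<bullet> (snd (fst q) - \<sigma> (fst (fst q), snd q))))"
  by (auto simp: fun_eq_iff V_s_def power2_norm_eq_inner split: prod.splits)

lemma smooth_V_s:
  fixes V :: "(real^'n) \<times> (real^'r) \<Rightarrow> real" and \<sigma> :: "(real^'n) \<times> (real^'r) \<Rightarrow> real^'s"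
  assumes "smooth V" "smooth \<sigma>"
  shows "smooth (V_s V \<sigma> \<gamma>s)"
proof -
  note drop = smooth_compose_bounded_linear[OF _ bounded_linear_drop_middle]
  have "smooth (\<lambda>q::((real^'n) \<times> (real^'s)) \<times> (real^'r). snd (fst q) - \<sigma> (fst (fst q), snd q))"
    by (intro smooth_diff drop assms smooth_bounded_linear
        bounded_linear_compose[OF bounded_linear_snd bounded_linear_fst])
  then have "smooth (\<lambda>q. V (fst (fst q), snd q) + (\<gamma>s / 2) *\<^sub>R
      ((snd (fst q) - \<sigma> (fst (fst q), snd q)) \<bullet> (snd (fst q) - \<sigma> (fst (fst q), snd q))))"
    by (intro smooth_add smooth_scaleR smooth_inner drop assms)
  then show ?thesis
    by (simp add: V_s_eq_inner)
qed

lemma has_derivative_V_s: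
  fixes V :: "(real^'n) \<times> (real^'r) \<Rightarrow> real" and \<sigma> :: "(real^'n) \<times> (real^'r) \<Rightarrow> real^'s"
  assumes "smooth V" "smooth \<sigma>"
  shows "(V_s V \<sigma> \<gamma>s has_derivative (\<lambda>w. frechet_derivative V (at (x, \<theta>)) (fst (fst w), snd w) +
      \<gamma>s * ((\<eta> - \<sigma> (x, \<theta>)) \<bullet> (snd (fst w) - frechet_derivative \<sigma> (at (x, \<theta>)) (fst (fst w), snd w)))))
    (at ((x, \<eta>), \<theta>))"
proof -
  let ?D\<sigma> = "frechet_derivative \<sigma> (at (x, \<theta>))"
  note drop = has_derivative_compose[OF bounded_linear_imp_has_derivative[OF bounded_linear_drop_middle]]
  have diff: "((\<lambda>q::((real^'n) \<times> (real^'s)) \<times> (real^'r). snd (fst q) - \<sigma> (fst (fst q), snd q))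
      has_derivative (\<lambda>w. snd (fst w) - ?D\<sigma> (fst (fst w), snd w))) (at ((x, \<eta>), \<theta>))"
    by (intro has_derivative_diff drop smooth_has_derivative assms has_derivative_snd has_derivative_fst
        has_derivative_ident) (auto intro: smooth_has_derivative assms)
  show ?thesis
    unfolding V_s_eq_inner
    by (rule has_derivative_eq_rhs[OF has_derivative_add[OF drop[OF smooth_has_derivative[OF assms(1)]]
          has_derivative_mult_right[OF has_derivative_inner[OF diff diff], of "\<gamma>s / 2"]]])
      (simp add: fun_eq_iff inner_commute algebra_simps)
qed

lemma grad_x_inner:
  assumes "V differentiable (at (x, \<theta>))"
  shows "grad_x V x \<theta> \<bullet> w = frechet_derivative V (at (x, \<theta>)) (w, 0)"
proof -
  let ?D = "frechet_derivative V (at (x, \<theta>))"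
  have "((\<lambda>y. V (y, \<theta>)) has_derivative (\<lambda>h. ?D (h, 0))) (at x)"
    using assms
    by (intro has_derivative_compose[OF has_derivative_Pair[OF has_derivative_ident has_derivative_const]])
      (simp add: frechet_derivative_works)
  then have partial: "frechet_derivative (\<lambda>y. V (y, \<theta>)) (at x) = (\<lambda>h. ?D (h, 0))"
    and linear: "linear (\<lambda>h. ?D (h, 0))"
    by (rule frechet_derivative_at[symmetric], rule has_derivative_linear)
  have "?D (w, 0) = ?D ((\<Sum>i\<in>UNIV. w $ i *s axis i 1), 0)"
    by (simp add: basis_expansion)
  also have "\<dots> = (\<Sum>i\<in>UNIV. w $ i * ?D (axis i 1, 0))"
    by (simp add: linear_sum[OF linear] linear_scale[OF linear] scalar_mult_eq_scaleR)
  finally show ?thesis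
    by (simp add: grad_x_def partial inner_vec_def mult.commute)
qed

text \<open>The cross term created by the input \<open>g \<Upsilon> (\<eta> - \<sigma>)\<close> in the derivative of \<open>V\<close> is
  cancelled by the last summand of \<open>kappa_s\<close>; the term \<open>D_t \<sigma>\<close> cancels the derivative of \<open>\<sigma>\<close>.\<close>

lemma lie_W_V_s:
  assumes "smooth V" "smooth \<sigma>" "\<gamma>s \<noteq> 0"
  shows "lie_W (V_s V \<sigma> \<gamma>s) (closed_loop (f_s f g \<omega> \<zeta> \<Upsilon>) g_s (kappa_s f g \<omega> \<zeta> \<Upsilon> \<sigma> V \<gamma>s k\<eta>)) ((x, \<eta>), \<theta>)
     = lie_W V (closed_loop (f_c f \<omega>) (g_c g) (kappa_dec \<zeta> \<Upsilon> \<sigma>)) (x, \<theta>)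
       - \<gamma>s * k\<eta> * (norm (\<eta> - \<sigma> (x, \<theta>)))\<^sup>2"
proof -
  define d where "d = \<eta> - \<sigma> (x, \<theta>)"
  define a where "a = f x + g x *v kappa_bar \<zeta> \<Upsilon> x \<eta>"
  define b where "b = f x + g x *v kappa_dec \<zeta> \<Upsilon> \<sigma> (x, \<theta>)"
  define c where "c = \<omega> (x, \<theta>)"
  define U where "U = transpose (\<Upsilon> x) *v (transpose (g x) *v grad_x V x \<theta>)"
  define DV where "DV = frechet_derivative V (at (x, \<theta>))"
  define D\<sigma> where "D\<sigma> = frechet_derivative \<sigma> (at (x, \<theta>))"
  have V: "V differentiable (at (x, \<theta>))"
    using assms(1) by (rule smooth_imp_differentiable)
  have "lie_W (V_s V \<sigma> \<gamma>s) (closed_loop (f_s f g \<omega> \<zeta> \<Upsilon>) g_s (kappa_s f g \<omega> \<zeta> \<Upsilon> \<sigma> V \<gamma>s k\<eta>)) ((x, \<eta>), \<theta>)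
      = DV (a, c) + \<gamma>s * (d \<bullet> (- (k\<eta> *\<^sub>R d) - (1 / \<gamma>s) *\<^sub>R U))"
    unfolding lie_W_def frechet_derivative_at[OF has_derivative_V_s[OF assms(1,2)], symmetric]
    by (simp add: closed_loop_def f_s_def g_s_def kappa_s_def Dt_sigma_def DV_def D\<sigma>_def a_def c_def
        d_def U_def)
  also have "DV (a, c) = DV (b, c) + DV (g x *v (\<Upsilon> x *v d), 0)"
    using linear_add[OF linear_frechet_derivative[OF V], of "(b, c)" "(g x *v (\<Upsilon> x *v d), 0)"]
    by (simp add: DV_def a_def b_def d_def kappa_bar_def kappa_dec_def matrix_vector_right_distrib
        matrix_vector_mult_diff_distrib)
  also have "DV (b, c) = lie_W V (closed_loop (f_c f \<omega>) (g_c g) (kappa_dec \<zeta> \<Upsilon> \<sigma>)) (x, \<theta>)"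
    by (simp add: lie_W_def closed_loop_def f_c_def g_c_def DV_def b_def c_def)
  also have "DV (g x *v (\<Upsilon> x *v d), 0) = U \<bullet> d"
    unfolding DV_def grad_x_inner[OF V, symmetric] U_def
    by (simp add: dot_lmul_matrix)
  finally show ?thesis
    using assms(3) by (simp add: d_def power2_norm_eq_inner inner_diff_right inner_commute algebra_simps)
qed

section \<open>Weak invariance, compactness and the synergy gap\<close>

lemma weakly_invariant_linear_image:
  fixes P :: "'a::real_normed_vector \<Rightarrow> 'b::real_normed_vector"
  assumes P: "bounded_linear P" and "P ` D \<subseteq> D'"
    and intertwine: "\<And>q. q \<in> S \<Longrightarrow> P (F q) = G (P q)"
    and "weakly_invariant D F S"
  shows "weakly_invariant D' G (P ` S)"
proof -
  have solution: "P (\<phi> t) \<in> D' \<and> ((\<lambda>t. P (\<phi> t)) has_vector_derivative G (P (\<phi> t))) (at t within I)"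
    if "\<phi> t \<in> D \<and> (\<phi> has_vector_derivative F (\<phi> t)) (at t within I)" "\<phi> t \<in> S" for \<phi> t I
    using that bounded_linear.has_vector_derivative[OF P] intertwine \<open>P ` D \<subseteq> D'\<close> by fastforce
  have "weakly_forward_invariant D' G (P ` S)"
    unfolding weakly_forward_invariant_def
  proof
    fix \<xi> assume "\<xi> \<in> P ` S"
    then obtain q where "q \<in> S" "\<xi> = P q" by blast
    with \<open>weakly_invariant D F S\<close> obtain \<phi>
      where "\<phi> 0 = q" "complete_solution D F \<phi>" "\<forall>t\<in>{0..}. \<phi> t \<in> S"
      unfolding weakly_invariant_def weakly_forward_invariant_def by blast
    with \<open>\<xi> = P q\<close> \<open>P ` D \<subseteq> D'\<close> show "\<exists>\<psi>. \<psi> 0 = \<xi> \<and> complete_solution D' G \<psi> \<and> (\<forall>t\<in>{0..}. \<psi> t \<in> P ` S)"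
      by (intro exI[of _ "\<lambda>t. P (\<phi> t)"]) (auto simp: complete_solution_def solution image_subset_iff)
  qed
  moreover have "weakly_backward_invariant D' G (P ` S)"
    unfolding weakly_backward_invariant_def
  proof (intro ballI allI impI)
    fix \<xi> and N :: real
    assume "\<xi> \<in> P ` S" "N > 0"
    then obtain q where "q \<in> S" "\<xi> = P q" by blast
    with \<open>weakly_invariant D F S\<close> \<open>N > 0\<close> obtain \<xi>0 \<phi> T
      where "\<xi>0 \<in> S" "\<phi> 0 = \<xi>0" "N \<le> T" "flow_solution_on D F \<phi> T" "\<phi> T = q"
        "\<forall>t\<in>{0..T}. \<phi> t \<in> S"
      unfolding weakly_invariant_def weakly_backward_invariant_def by meson
    with \<open>\<xi> = P q\<close> \<open>P ` D \<subseteq> D'\<close> show "\<exists>\<xi>0\<in>P ` S. \<exists>\<psi> T. \<psi> 0 = \<xi>0 \<and> N \<le> T \<and> flow_solution_on D' G \<psi> T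
        \<and> \<psi> T = \<xi> \<and> (\<forall>t\<in>{0..T}. \<psi> t \<in> P ` S)"
      by (intro bexI[of _ "P \<xi>0"] exI[of _ "\<lambda>t. P (\<phi> t)"] exI[of _ T])
        (auto simp: flow_solution_on_def solution image_subset_iff)
  qed
  ultimately show ?thesis
    unfolding weakly_invariant_def by blast
qed

lemma A_s_eq_image: "A_s A \<sigma> = (\<lambda>p. ((fst p, \<sigma> p), snd p)) ` A"
  by (force simp: A_s_def)

lemma compact_A_s: "smooth \<sigma> \<Longrightarrow> compact A \<Longrightarrow> compact (A_s A \<sigma>)"
  unfolding A_s_eq_image
  by (intro compact_continuous_image continuous_intros smooth_imp_continuous_on)

text \<open>A sublevel set of \<open>V_s\<close> lies in the image of the sublevel set of \<open>V\<close> times a ball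
  under \<open>((x, \<theta>), e) \<mapsto> ((x, \<sigma> (x, \<theta>) + e), \<theta>)\<close>, since \<open>V_s \<le> \<epsilon>\<close> forces
  \<open>\<parallel>\<eta> - \<sigma> (x, \<theta>)\<parallel>\<^sup>2 \<le> 2 \<epsilon> / \<gamma>s\<close>.\<close>

lemma compact_sublevel_V_s:
  fixes V :: "(real^'n) \<times> (real^'r) \<Rightarrow> real" and \<sigma> :: "(real^'n) \<times> (real^'r) \<Rightarrow> real^'s"
  assumes "smooth V" "smooth \<sigma>" "closed X" "\<gamma>s > 0"
    and nonneg: "\<forall>p\<in>X \<times> UNIV. 0 \<le> V p" and compact: "compact {p \<in> X \<times> UNIV. V p \<le> \<epsilon>}"
  shows "compact {q \<in> (X \<times> (UNIV::(real^'s) set)) \<times> UNIV. V_s V \<sigma> \<gamma>s q \<le> \<epsilon>}"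
    (is "compact ?S")
proof -
  let ?K = "{p \<in> X \<times> UNIV. V p \<le> \<epsilon>} \<times> cball 0 (sqrt (2 * \<epsilon> / \<gamma>s))"
  let ?m = "\<lambda>(p, e). ((fst p, \<sigma> p + e), snd p)"
  have "continuous_on ?K (\<lambda>pe. \<sigma> (fst pe))"
    by (rule continuous_on_compose2[OF smooth_imp_continuous_on[OF \<open>smooth \<sigma>\<close>]
          continuous_on_fst[OF continuous_on_id] subset_UNIV])
  then have "compact (?m ` ?K)"
    using compact
    by (intro compact_continuous_image compact_Times compact_cball)
      (auto intro!: continuous_intros simp: case_prod_unfold)
  moreover have "closed ?S"
    using smooth_imp_continuous_on[OF smooth_V_s[OF assms(1,2)]] \<open>closed X\<close>
    by (intro closed_Collect_conj closed_Collect_le) (auto intro: closed_Times continuous_intros)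
  ultimately have "compact (?m ` ?K \<inter> ?S)"
    by (rule compact_Int_closed)
  moreover have "?S \<subseteq> ?m ` ?K"
  proof clarify
    fix x \<eta> \<theta>
    assume "x \<in> X" and le: "V_s V \<sigma> \<gamma>s ((x, \<eta>), \<theta>) \<le> \<epsilon>"
    then have "0 \<le> V (x, \<theta>)" "V (x, \<theta>) + \<gamma>s / 2 * (norm (\<eta> - \<sigma> (x, \<theta>)))\<^sup>2 \<le> \<epsilon>"
      using nonneg by (auto simp: V_s_def)
    moreover have "0 \<le> \<gamma>s / 2 * (norm (\<eta> - \<sigma> (x, \<theta>)))\<^sup>2"
      using \<open>\<gamma>s > 0\<close> by simp
    ultimately have "V (x, \<theta>) \<le> \<epsilon>" "\<gamma>s / 2 * (norm (\<eta> - \<sigma> (x, \<theta>)))\<^sup>2 \<le> \<epsilon>"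
      by linarith+
    then have "V (x, \<theta>) \<le> \<epsilon>" "(norm (\<eta> - \<sigma> (x, \<theta>)))\<^sup>2 \<le> 2 * \<epsilon> / \<gamma>s"
      using \<open>\<gamma>s > 0\<close> by (simp_all add: field_simps)
    then show "((x, \<eta>), \<theta>) \<in> ?m ` ?K"
      using \<open>x \<in> X\<close>
      by (intro image_eqI[of _ _ "((x, \<theta>), \<eta> - \<sigma> (x, \<theta>))"])
        (auto simp: dist_norm norm_minus_commute real_le_rsqrt)
  qed
  ultimately show ?thesis
    by (simp add: Int_absorb1)
qed

lemma V_s_nonneg:
  assumes "\<forall>p\<in>X \<times> UNIV. 0 \<le> V p" "0 \<le> \<gamma>s"
  shows "\<forall>q\<in>(X \<times> UNIV) \<times> UNIV. 0 \<le> V_s V \<sigma> \<gamma>s q"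
  using assms by (auto simp: V_s_def)

lemma V_s_eq_0_iff:
  assumes "\<forall>p\<in>X \<times> UNIV. 0 \<le> V p" "\<forall>p\<in>X \<times> UNIV. V p = 0 \<longleftrightarrow> p \<in> A" "0 < \<gamma>s"
  shows "\<forall>q\<in>(X \<times> UNIV) \<times> UNIV. V_s V \<sigma> \<gamma>s q = 0 \<longleftrightarrow> q \<in> A_s A \<sigma>"
  using assms by (auto simp: V_s_def A_s_def add_nonneg_eq_0_iff)

lemma lie_W_V_s_nonpos:
  assumes "smooth V" "smooth \<sigma>" "0 < \<gamma>s" "0 < k\<eta>"
    and decrease: "\<forall>p\<in>X \<times> UNIV. lie_W V (closed_loop (f_c f \<omega>) (g_c g) (kappa_dec \<zeta> \<Upsilon> \<sigma>)) p \<le> 0"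
  shows "\<forall>q\<in>(X \<times> UNIV) \<times> UNIV.
    lie_W (V_s V \<sigma> \<gamma>s) (closed_loop (f_s f g \<omega> \<zeta> \<Upsilon>) g_s (kappa_s f g \<omega> \<zeta> \<Upsilon> \<sigma> V \<gamma>s k\<eta>)) q \<le> 0"
proof clarify
  fix x \<eta> \<theta>
  assume "x \<in> X"
  have "0 \<le> \<gamma>s * k\<eta> * (norm (\<eta> - \<sigma> (x, \<theta>)))\<^sup>2"
    using assms(3,4) by simp
  moreover have "lie_W V (closed_loop (f_c f \<omega>) (g_c g) (kappa_dec \<zeta> \<Upsilon> \<sigma>)) (x, \<theta>) \<le> 0"
    using decrease \<open>x \<in> X\<close> by blast
  ultimately show "lie_W (V_s V \<sigma> \<gamma>s)
      (closed_loop (f_s f g \<omega> \<zeta> \<Upsilon>) g_s (kappa_s f g \<omega> \<zeta> \<Upsilon> \<sigma> V \<gamma>s k\<eta>)) ((x, \<eta>), \<theta>) \<le> 0"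
    unfolding lie_W_V_s[OF assms(1,2) less_imp_neq[OF assms(3), symmetric]] by linarith
qed

lemma lie_W_V_s_eq_0_imp:
  assumes "smooth V" "smooth \<sigma>" "0 < \<gamma>s" "0 < k\<eta>"
    and "lie_W V (closed_loop (f_c f \<omega>) (g_c g) (kappa_dec \<zeta> \<Upsilon> \<sigma>)) (x, \<theta>) \<le> 0"
    and "lie_W (V_s V \<sigma> \<gamma>s) (closed_loop (f_s f g \<omega> \<zeta> \<Upsilon>) g_s (kappa_s f g \<omega> \<zeta> \<Upsilon> \<sigma> V \<gamma>s k\<eta>))
      ((x, \<eta>), \<theta>) = 0"
  shows "\<eta> = \<sigma> (x, \<theta>) \<and> lie_W V (closed_loop (f_c f \<omega>) (g_c g) (kappa_dec \<zeta> \<Upsilon> \<sigma>)) (x, \<theta>) = 0"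
proof -
  have "0 \<le> \<gamma>s * k\<eta> * (norm (\<eta> - \<sigma> (x, \<theta>)))\<^sup>2"
    using assms(3,4) by simp
  then have "\<gamma>s * k\<eta> * (norm (\<eta> - \<sigma> (x, \<theta>)))\<^sup>2 = 0"
    and "lie_W V (closed_loop (f_c f \<omega>) (g_c g) (kappa_dec \<zeta> \<Upsilon> \<sigma>)) (x, \<theta>) = 0"
    using assms(5,6) unfolding lie_W_V_s[OF assms(1,2) less_imp_neq[OF assms(3), symmetric]]
    by linarith+
  then show ?thesis
    using assms(3,4) by simp
qed

text \<open>On \<open>E_W\<close> of the smooth extended system \<open>\<eta> = \<sigma> (x, \<theta>)\<close>, where its closed-loop field
  projects onto that of the extended system; hence weakly invariant subsets of it project to
  weakly invariant subsets of \<open>E_W\<close> of the extended system.\<close>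

lemma Psi_W_V_s_projection:
  fixes V :: "(real^'n) \<times> (real^'r) \<Rightarrow> real" and \<sigma> :: "(real^'n) \<times> (real^'r) \<Rightarrow> real^'s"
  assumes "smooth V" "smooth \<sigma>" "0 < \<gamma>s" "0 < k\<eta>"
    and decrease: "\<forall>p\<in>X \<times> UNIV. lie_W V (closed_loop (f_c f \<omega>) (g_c g) (kappa_dec \<zeta> \<Upsilon> \<sigma>)) p \<le> 0"
    and "((x, \<eta>), \<theta>) \<in> Psi_W (X \<times> UNIV) (f_s f g \<omega> \<zeta> \<Upsilon>) g_s (V_s V \<sigma> \<gamma>s) (kappa_s f g \<omega> \<zeta> \<Upsilon> \<sigma> V \<gamma>s k\<eta>)"
  shows "\<eta> = \<sigma> (x, \<theta>) \<and> (x, \<theta>) \<in> Psi_W X (f_c f \<omega>) (g_c g) V (kappa_dec \<zeta> \<Upsilon> \<sigma>)"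
proof -
  let ?Fs = "closed_loop (f_s f g \<omega> \<zeta> \<Upsilon>) g_s (kappa_s f g \<omega> \<zeta> \<Upsilon> \<sigma> V \<gamma>s k\<eta>)"
  let ?Fc = "closed_loop (f_c f \<omega>) (g_c g) (kappa_dec \<zeta> \<Upsilon> \<sigma>)"
  let ?P = "\<lambda>q::((real^'n) \<times> (real^'s)) \<times> (real^'r). (fst (fst q), snd q)"
  obtain S where "((x, \<eta>), \<theta>) \<in> S" and S_E: "S \<subseteq> E_W (X \<times> UNIV) (f_s f g \<omega> \<zeta> \<Upsilon>) g_s (V_s V \<sigma> \<gamma>s)
      (kappa_s f g \<omega> \<zeta> \<Upsilon> \<sigma> V \<gamma>s k\<eta>)" and "weakly_invariant ((X \<times> UNIV) \<times> UNIV) ?Fs S"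
    using assms(6) unfolding Psi_W_def by blast
  have on_S: "x' \<in> X \<and> \<eta>' = \<sigma> (x', \<theta>') \<and> lie_W V ?Fc (x', \<theta>') = 0" if "((x', \<eta>'), \<theta>') \<in> S" for x' \<eta>' \<theta>'
    using S_E that lie_W_V_s_eq_0_imp[OF assms(1-4)] decrease by (fastforce simp: E_W_def)
  have "weakly_invariant (X \<times> UNIV) ?Fc (?P ` S)"
  proof (rule weakly_invariant_linear_image[OF bounded_linear_drop_middle])
    show "?P ` ((X \<times> UNIV) \<times> UNIV) \<subseteq> X \<times> UNIV"
      by auto
    show "?P (?Fs q) = ?Fc (?P q)" if "q \<in> S" for q
      using that on_S
      by (cases q) (auto simp: closed_loop_def f_s_def g_s_def f_c_def g_c_def kappa_bar_def kappa_dec_def)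
  qed fact
  moreover have "?P ` S \<subseteq> E_W X (f_c f \<omega>) (g_c g) V (kappa_dec \<zeta> \<Upsilon> \<sigma>)"
    using on_S by (force simp: E_W_def)
  ultimately have "?P ` S \<subseteq> Psi_W X (f_c f \<omega>) (g_c g) V (kappa_dec \<zeta> \<Upsilon> \<sigma>)"
    unfolding Psi_W_def by blast
  then show ?thesis
    using on_S \<open>((x, \<eta>), \<theta>) \<in> S\<close> by force
qed

lemma mu_W_V_s_ge:
  assumes "finite \<Theta>" "\<Theta> \<noteq> {}" "0 \<le> \<gamma>s"
    and spread: "Max ((\<lambda>\<theta>b. (norm (\<sigma> (x, \<theta>) - \<sigma> (x, \<theta>b)))\<^sup>2) ` \<Theta>) \<le> 2 * c"
  shows "mu_W V \<Theta> (x, \<theta>) - \<gamma>s * c \<le> mu_W (V_s V \<sigma> \<gamma>s) \<Theta> ((x, \<sigma> (x, \<theta>)), \<theta>)"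
proof -
  have "Min ((\<lambda>\<theta>b. V (x, \<theta>b)) ` \<Theta>) \<in> (\<lambda>\<theta>b. V (x, \<theta>b)) ` \<Theta>"
    using assms(1,2) by (intro Min_in) auto
  then obtain \<theta>m where "\<theta>m \<in> \<Theta>" and \<theta>m: "Min ((\<lambda>\<theta>b. V (x, \<theta>b)) ` \<Theta>) = V (x, \<theta>m)"
    by blast
  have "(norm (\<sigma> (x, \<theta>) - \<sigma> (x, \<theta>m)))\<^sup>2 \<le> Max ((\<lambda>\<theta>b. (norm (\<sigma> (x, \<theta>) - \<sigma> (x, \<theta>b)))\<^sup>2) ` \<Theta>)"
    using \<open>\<theta>m \<in> \<Theta>\<close> assms(1) by (intro Max_ge) auto
  with spread have "V_s V \<sigma> \<gamma>s ((x, \<sigma> (x, \<theta>)), \<theta>m) \<le> V (x, \<theta>m) + \<gamma>s * c"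
    using mult_left_mono[of _ "2 * c" "\<gamma>s / 2"] assms(3) by (simp add: V_s_def)
  moreover have "Min ((\<lambda>\<theta>b. V_s V \<sigma> \<gamma>s ((x, \<sigma> (x, \<theta>)), \<theta>b)) ` \<Theta>) \<le> V_s V \<sigma> \<gamma>s ((x, \<sigma> (x, \<theta>)), \<theta>m)"
    using \<open>\<theta>m \<in> \<Theta>\<close> assms(1) by (intro Min_le) auto
  ultimately show ?thesis
    by (simp add: mu_W_def V_s_def \<theta>m)
qed

lemma synergy_gap_V_s:
  fixes V :: "(real^'n) \<times> (real^'r) \<Rightarrow> real" and \<sigma> :: "(real^'n) \<times> (real^'r) \<Rightarrow> real^'s"
  assumes "smooth V" "smooth \<sigma>" "0 < \<gamma>s" "0 < k\<eta>" "finite \<Theta>" "\<Theta> \<noteq> {}"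
    and decrease: "\<forall>p\<in>X \<times> UNIV. lie_W V (closed_loop (f_c f \<omega>) (g_c g) (kappa_dec \<zeta> \<Upsilon> \<sigma>)) p \<le> 0"
    and gap: "\<forall>p\<in>Psi_W X (f_c f \<omega>) (g_c g) V (kappa_dec \<zeta> \<Upsilon> \<sigma>) - A. c \<le> mu_W V \<Theta> p"
    and spread: "\<forall>p\<in>Psi_W X (f_c f \<omega>) (g_c g) V (kappa_dec \<zeta> \<Upsilon> \<sigma>) - A.
      Max ((\<lambda>\<theta>b. (norm (\<sigma> p - \<sigma> (fst p, \<theta>b)))\<^sup>2) ` \<Theta>) \<le> 2 * c\<kappa>"
  shows "\<forall>q\<in>Psi_W (X \<times> UNIV) (f_s f g \<omega> \<zeta> \<Upsilon>) g_s (V_s V \<sigma> \<gamma>s) (kappa_s f g \<omega> \<zeta> \<Upsilon> \<sigma> V \<gamma>s k\<eta>) - A_s A \<sigma>.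
    c - \<gamma>s * c\<kappa> \<le> mu_W (V_s V \<sigma> \<gamma>s) \<Theta> q"
proof clarify
  fix x \<eta> \<theta>
  assume "((x, \<eta>), \<theta>) \<in> Psi_W (X \<times> UNIV) (f_s f g \<omega> \<zeta> \<Upsilon>) g_s (V_s V \<sigma> \<gamma>s) (kappa_s f g \<omega> \<zeta> \<Upsilon> \<sigma> V \<gamma>s k\<eta>)"
    and "((x, \<eta>), \<theta>) \<notin> A_s A \<sigma>"
  then have "\<eta> = \<sigma> (x, \<theta>)" and Psi: "(x, \<theta>) \<in> Psi_W X (f_c f \<omega>) (g_c g) V (kappa_dec \<zeta> \<Upsilon> \<sigma>) - A"
    using Psi_W_V_s_projection[OF assms(1-4) decrease] by (auto simp: A_s_def)
  have "c \<le> mu_W V \<Theta> (x, \<theta>)"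
    using bspec[OF gap Psi] by simp
  moreover have "Max ((\<lambda>\<theta>b. (norm (\<sigma> (x, \<theta>) - \<sigma> (x, \<theta>b)))\<^sup>2) ` \<Theta>) \<le> 2 * c\<kappa>"
    using bspec[OF spread Psi] by simp
  note mu_W_V_s_ge[where V = V, OF assms(5,6) less_imp_le[OF assms(3)] this]
  ultimately show "c - \<gamma>s * c\<kappa> \<le> mu_W (V_s V \<sigma> \<gamma>s) \<Theta> ((x, \<eta>), \<theta>)"
    unfolding \<open>\<eta> = \<sigma> (x, \<theta>)\<close> by linarith
qed

theorem proposition1:
  fixes X :: "(real^'n) set"
    and f :: "real^'n \<Rightarrow> real^'n"
    and g :: "real^'n \<Rightarrow> real^'m^'n"
    and \<Theta> :: "(real^'r) set"
    and \<omega> :: "(real^'n) \<times> (real^'r) \<Rightarrow> real^'r"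
    and V :: "(real^'n) \<times> (real^'r) \<Rightarrow> real"
    and A :: "((real^'n) \<times> (real^'r)) set"
    and \<delta> :: real
    and \<zeta> :: "real^'n \<Rightarrow> real^'m"
    and \<Upsilon> :: "real^'n \<Rightarrow> real^'s^'m"
    and \<sigma> :: "(real^'n) \<times> (real^'r) \<Rightarrow> real^'s"
    and c\<kappa> \<gamma>s k\<eta> :: real
  assumes "closed X" and "X \<noteq> {}"
    and "smooth f" and "smooth g"
    and "finite \<Theta>" and "\<Theta> \<noteq> {}"
    and "smooth \<omega>"
    and "smooth \<zeta>" and "smooth \<Upsilon>" and "smooth \<sigma>"
    and "0 < \<delta>"
    and quad: "synergistic_quadruple X (f_c f \<omega>) (g_c g) V (kappa_dec \<zeta> \<Upsilon> \<sigma>) \<Theta> A \<delta>"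
    and "0 < c\<kappa>"
    and assm1: "\<forall>p \<in> Psi_W X (f_c f \<omega>) (g_c g) V (kappa_dec \<zeta> \<Upsilon> \<sigma>) - A.
                  Max ((\<lambda>\<theta>b. (norm (\<sigma> p - \<sigma> (fst p, \<theta>b)))\<^sup>2) ` \<Theta>) \<le> 2 * c\<kappa>"
    and "0 < \<gamma>s" and "\<gamma>s < \<delta> / c\<kappa>"
    and "0 < k\<eta>"
  shows "\<forall>\<delta>s. 0 < \<delta>s \<and> \<delta>s \<le> \<delta> - \<gamma>s * c\<kappa> \<longrightarrow>
           synergistic_quadruple (X \<times> UNIV) (f_s f g \<omega> \<zeta> \<Upsilon>) g_s (V_s V \<sigma> \<gamma>s)
             (kappa_s f g \<omega> \<zeta> \<Upsilon> \<sigma> V \<gamma>s k\<eta>) \<Theta> (A_s A \<sigma>) \<delta>s"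
proof (intro allI impI)
  fix \<delta>s
  assume \<delta>s: "0 < \<delta>s \<and> \<delta>s \<le> \<delta> - \<gamma>s * c\<kappa>"
  note quadV = quad[unfolded synergistic_quadruple_def]
  then obtain c where "\<delta> < c" and gap: "\<forall>p\<in>Psi_W X (f_c f \<omega>) (g_c g) V (kappa_dec \<zeta> \<Upsilon> \<sigma>) - A. c \<le> mu_W V \<Theta> p"
    by blast
  have "smooth V" and "compact A" and "A \<subseteq> X \<times> UNIV"
    and nonneg: "\<forall>p\<in>X \<times> UNIV. 0 \<le> V p"
    and zero: "\<forall>p\<in>X \<times> UNIV. V p = 0 \<longleftrightarrow> p \<in> A"
    and sublevel: "\<forall>\<epsilon>\<ge>0. compact {p \<in> X \<times> UNIV. V p \<le> \<epsilon>}"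
    and decrease: "\<forall>p\<in>X \<times> UNIV. lie_W V (closed_loop (f_c f \<omega>) (g_c g) (kappa_dec \<zeta> \<Upsilon> \<sigma>)) p \<le> 0"
    using quadV by blast+
  show "synergistic_quadruple (X \<times> UNIV) (f_s f g \<omega> \<zeta> \<Upsilon>) g_s (V_s V \<sigma> \<gamma>s)
      (kappa_s f g \<omega> \<zeta> \<Upsilon> \<sigma> V \<gamma>s k\<eta>) \<Theta> (A_s A \<sigma>) \<delta>s"
    unfolding synergistic_quadruple_def
  proof (intro conjI exI[of _ "c - \<gamma>s * c\<kappa>"] allI impI)
    show "smooth (V_s V \<sigma> \<gamma>s)"
      using \<open>smooth V\<close> \<open>smooth \<sigma>\<close> by (rule smooth_V_s)
    show "compact (A_s A \<sigma>)"
      using \<open>smooth \<sigma>\<close> \<open>compact A\<close> by (rule compact_A_s)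
    show "compact {q \<in> (X \<times> UNIV) \<times> UNIV. V_s V \<sigma> \<gamma>s q \<le> \<epsilon>}" if "0 \<le> \<epsilon>" for \<epsilon>
      using sublevel that by (intro compact_sublevel_V_s nonneg) (simp_all add: assms \<open>smooth V\<close>)
    show "A_s A \<sigma> \<subseteq> (X \<times> UNIV) \<times> UNIV"
      using \<open>A \<subseteq> X \<times> UNIV\<close> by (auto simp: A_s_def)
    show "\<forall>q\<in>(X \<times> UNIV) \<times> UNIV. 0 \<le> V_s V \<sigma> \<gamma>s q"
      using nonneg \<open>0 < \<gamma>s\<close> by (intro V_s_nonneg) simp_all
    show "\<forall>q\<in>(X \<times> UNIV) \<times> UNIV. V_s V \<sigma> \<gamma>s q = 0 \<longleftrightarrow> q \<in> A_s A \<sigma>"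
      using nonneg zero \<open>0 < \<gamma>s\<close> by (rule V_s_eq_0_iff)
    show "\<forall>q\<in>(X \<times> UNIV) \<times> UNIV. lie_W (V_s V \<sigma> \<gamma>s)
        (closed_loop (f_s f g \<omega> \<zeta> \<Upsilon>) g_s (kappa_s f g \<omega> \<zeta> \<Upsilon> \<sigma> V \<gamma>s k\<eta>)) q \<le> 0"
      using \<open>smooth V\<close> \<open>smooth \<sigma>\<close> \<open>0 < \<gamma>s\<close> \<open>0 < k\<eta>\<close> decrease by (rule lie_W_V_s_nonpos)
    show "\<forall>q\<in>Psi_W (X \<times> UNIV) (f_s f g \<omega> \<zeta> \<Upsilon>) g_s (V_s V \<sigma> \<gamma>s) (kappa_s f g \<omega> \<zeta> \<Upsilon> \<sigma> V \<gamma>s k\<eta>)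
        - A_s A \<sigma>. c - \<gamma>s * c\<kappa> \<le> mu_W (V_s V \<sigma> \<gamma>s) \<Theta> q"
      using \<open>smooth V\<close> \<open>smooth \<sigma>\<close> \<open>0 < \<gamma>s\<close> \<open>0 < k\<eta>\<close> \<open>finite \<Theta>\<close> \<open>\<Theta> \<noteq> {}\<close> decrease gap assm1
      by (rule synergy_gap_V_s)
    show "\<delta>s < c - \<gamma>s * c\<kappa>"
      using \<delta>s \<open>\<delta> < c\<close> by linarith
  qed
qed

end
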